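(* If $S\subseteq\mathbb N^d$ is a PI-monoid, then there exist a unique submonoid $T$ of $\mathbb N^d$ and a unique $\mathbf a\in T\setminus\{0\}$ such that $S=(\mathbf a+T)\cup\{0\}$.
   Context: A submonoid $S$ of $\mathbb N^d$ is a PI-monoid if there exist a submonoid $T$ of $\mathbb N^d$ and $\mathbf a\in T\setminus\{0\}$ with $S=(\mathbf a+T)\cup\{0\}$. *)

theory Defs
  imports "HOL-Analysis.Analysis"
begin

text \<open>Elements of N^d are modelled as vectors nat ^ 'd, with 'd a finite index type
(d = CARD('d)). Addition and zero are componentwise.\<close>

definition submonoid :: "(nat ^ 'd) set \<Rightarrow> bool" where
  "submonoid T \<longleftrightarrow> 0 \<in> T \<and> (\<forall>x\<in>T. \<forall>y\<in>T. x + y \<in> T)"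

definition PI_monoid :: "(nat ^ 'd) set \<Rightarrow> bool" where
  "PI_monoid S \<longleftrightarrow> submonoid S \<and>
     (\<exists>T a. submonoid T \<and> a \<in> T \<and> a \<noteq> 0 \<and> S = ((\<lambda>t. a + t) ` T) \<union> {0})"

end

theory Submission
  imports Defs
begin

text \<open>Both the shift and the translated monoid can be read off from \<open>S\<close>, in any cancellative
  commutative monoid without nontrivial sums equal to zero. If \<open>S = (a + T) \<union> {0} = (b + U) \<union> {0}\<close>
  with \<open>0 \<in> T, U\<close>, then \<open>a, b \<in> S - {0}\<close> give \<open>b = a + t\<close> and \<open>a = b + u\<close>, so \<open>t + u = 0\<close> and
  \<open>a = b\<close>. Since no \<open>a + t\<close> vanishes, cancellation then recovers \<open>T\<close> as the preimage of \<open>S\<close>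
  under \<open>t \<mapsto> a + t\<close>.\<close>

lemma vec_nat_zero_sum_free: "\<forall>x y :: nat ^ 'd. x + y = 0 \<longrightarrow> x = 0"
  by (auto simp: vec_eq_iff)

lemma vimage_translate_insert_zero:
  fixes a :: "'a :: cancel_comm_monoid_add"
  assumes zero_sum_free: "\<forall>x y :: 'a. x + y = 0 \<longrightarrow> x = 0"
    and "a \<noteq> 0"
  shows "(\<lambda>t. a + t) -` ((\<lambda>t. a + t) ` T \<union> {0}) = T"
  using zero_sum_free \<open>a \<noteq> 0\<close> by auto

lemma translate_insert_zero_shift_unique:
  fixes a b :: "'a :: cancel_comm_monoid_add"
  assumes zero_sum_free: "\<forall>x y :: 'a. x + y = 0 \<longrightarrow> x = 0"
    and "0 \<in> T" "0 \<in> U" "a \<noteq> 0" "b \<noteq> 0"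
    and eq: "(\<lambda>t. a + t) ` T \<union> {0} = (\<lambda>t. b + t) ` U \<union> {0}"
  shows "a = b"
proof -
  have "b \<in> (\<lambda>t. a + t) ` T"
    using eq \<open>0 \<in> U\<close> \<open>b \<noteq> 0\<close> by (metis Un_iff add_0_right image_eqI singletonD)
  then obtain t where t: "b = a + t" by blast
  have "a \<in> (\<lambda>t. b + t) ` U"
    using eq \<open>0 \<in> T\<close> \<open>a \<noteq> 0\<close> by (metis Un_iff add_0_right image_eqI singletonD)
  then obtain u where "a = b + u" by blast
  with t have "t + u = 0" by (metis add.assoc add_0_right add_left_cancel)
  then show "a = b" using t zero_sum_free by auto
qed

theorem corollary5p6:
  fixes S :: "(nat ^ 'd) set"
  assumes "PI_monoid S"
  shows "\<exists>!p :: (nat ^ 'd) set \<times> (nat ^ 'd).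
           submonoid (fst p) \<and> snd p \<in> fst p \<and> snd p \<noteq> 0 \<and>
           S = ((\<lambda>t. snd p + t) ` fst p) \<union> {0}"
proof -
  obtain T a where T: "submonoid T" "a \<in> T" "a \<noteq> 0" and S: "S = ((\<lambda>t. a + t) ` T) \<union> {0}"
    using assms unfolding PI_monoid_def by blast
  show ?thesis
  proof (rule ex1I[of _ "(T, a)"])
    fix p :: "(nat ^ 'd) set \<times> (nat ^ 'd)"
    obtain U b where p_eq: "p = (U, b)" by (cases p)
    assume "submonoid (fst p) \<and> snd p \<in> fst p \<and> snd p \<noteq> 0 \<and>
           S = ((\<lambda>t. snd p + t) ` fst p) \<union> {0}"
    then have U: "0 \<in> U" "b \<noteq> 0" and S_U: "S = ((\<lambda>t. b + t) ` U) \<union> {0}"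
      by (simp_all add: p_eq submonoid_def)
    have "0 \<in> T" using T(1) by (simp add: submonoid_def)
    have "b = a"
    proof (rule translate_insert_zero_shift_unique[where T = U and U = T])
      show "(\<lambda>t. b + t) ` U \<union> {0} = (\<lambda>t. a + t) ` T \<union> {0}"
        using S S_U by (simp only:)
    qed (fact vec_nat_zero_sum_free U \<open>0 \<in> T\<close> T(3))+
    moreover have "U = T"
      using vimage_translate_insert_zero[where T = U, OF vec_nat_zero_sum_free U(2)]
        vimage_translate_insert_zero[where T = T, OF vec_nat_zero_sum_free T(3)] S S_U \<open>b = a\<close>
      by metis
    ultimately show "p = (T, a)" by (simp add: p_eq)
  qed (use T S in simp)
qed

end
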